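(* Let $z(t)$, $t\in[0,T]$, be a càdlàg Markov process with values in $\mathbb{R}^m$ on $(\Omega,\mathcal{F},P)$, let $D\subset\mathbb{R}^m$ be closed, and let $\tau_t\triangleq\inf\{s\in[t,T]: z(s)\notin D\}$ (with $\inf\emptyset=\infty$). Let $0=t_0<t_1<\dots<t_k=T$ be a partition and write $z_i=z(t_i)$, $\tau_i=\tau_{t_i}$. Let $\bar b_i$ denote the law of $z_i$, and define the (regular conditional) function $\bar\Psi_i(\zeta)\triangleq P(\tau_0\ge t_i,\ z_i\in D\mid z_i=\zeta)$. For a finite (not necessarily normalized) measure $\mu$ on $\mathbb{R}^m$ define $$\Phi(t_i,t_{i+1};\mu)\triangleq\int_{\mathbb{R}^m} P(\tau_i<t_{i+1}\mid z_i=\zeta)\,\mu(d\zeta).$$ Then the exit cumulant $F(T)\triangleq P\big(\exists s\in[0,T]: z(s)\notin D\big)$ satisfies $$F(T)=\sum_{i=0}^{k-1}\Phi\big(t_i,t_{i+1};\bar\Psi_i\,\bar b_i\big)+\sum_{i=0}^{k}P\big(\tau_0=t_i,\ z_i\in D^c\big),$$ where $\bar\Psi_i\bar b_i$ denotes the measure $\bar\Psi_i(\zeta)\,\bar b_i(d\zeta)$.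
   Context: $D^c$ is the complement of $D$. The Markov property is used in the sense that, conditionally on $z(t_i)$, the future path $(z(s))_{s\ge t_i}$ is independent of $(z(s))_{s\le t_i}$. *)

theory Defs
  imports "HOL-Probability.Probability"
begin

definition exit_time ::
  "(real \<Rightarrow> 'w \<Rightarrow> 'a) \<Rightarrow> 'a set \<Rightarrow> real \<Rightarrow> real \<Rightarrow> 'w \<Rightarrow> ereal" where
  "exit_time z D T t \<omega> =
     (if \<exists>s\<in>{t..T}. z s \<omega> \<notin> D then ereal (Inf {s\<in>{t..T}. z s \<omega> \<notin> D}) else \<infinity>)"

definition cadlag_on :: "real \<Rightarrow> (real \<Rightarrow> 'a::topological_space) \<Rightarrow> bool" where
  "cadlag_on T f \<longleftrightarrow>
     (\<forall>t\<in>{0..<T}. continuous (at_right t) f) \<and>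
     (\<forall>t\<in>{0<..T}. \<exists>l. (f \<longlongrightarrow> l) (at_left t))"

definition past_alg :: "'w measure \<Rightarrow> (real \<Rightarrow> 'w \<Rightarrow> 'a::topological_space) \<Rightarrow> real \<Rightarrow> 'w measure" where
  "past_alg M z t = sigma (space M) {z s -` B \<inter> space M | s B. s \<in> {0..t} \<and> B \<in> sets borel}"

definition future_alg :: "'w measure \<Rightarrow> (real \<Rightarrow> 'w \<Rightarrow> 'a::topological_space) \<Rightarrow> real \<Rightarrow> real \<Rightarrow> 'w measure" where
  "future_alg M z t T = sigma (space M) {z s -` B \<inter> space M | s B. s \<in> {t..T} \<and> B \<in> sets borel}"

definition markov_on :: "'w measure \<Rightarrow> real \<Rightarrow> (real \<Rightarrow> 'w \<Rightarrow> 'a::topological_space) \<Rightarrow> bool" where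
  "markov_on M T z \<longleftrightarrow>
     (\<forall>t\<in>{0..T}. \<forall>A\<in>sets (past_alg M z t). \<forall>B\<in>sets (future_alg M z t T).
        AE \<omega> in M. real_cond_exp M (vimage_algebra (space M) (z t) borel) (indicator (A \<inter> B)) \<omega> =
          real_cond_exp M (vimage_algebra (space M) (z t) borel) (indicator A) \<omega> *
          real_cond_exp M (vimage_algebra (space M) (z t) borel) (indicator B) \<omega>)"

text \<open>g is a (regular) version of zeta |-> P(A | X = zeta): a Borel function with values
  in [0,1] such that P(A, X in B) = integral over B of g with respect to the law of X.\<close>
definition cond_prob_fn :: "'w measure \<Rightarrow> ('w \<Rightarrow> 'a::topological_space) \<Rightarrow> 'w set \<Rightarrow> ('a \<Rightarrow> real) \<Rightarrow> bool" where
  "cond_prob_fn M X A g \<longleftrightarrow>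
     g \<in> borel_measurable borel \<and> (\<forall>\<zeta>. 0 \<le> g \<zeta> \<and> g \<zeta> \<le> 1) \<and>
     (\<forall>B\<in>sets borel. measure M (A \<inter> X -` B \<inter> space M) = (LINT \<zeta>:B|distr M borel X. g \<zeta>))"

end

theory Submission
  imports Defs
begin

text \<open>Let \<open>\<sigma>\<close> be the first exit time \<open>\<tau>\<^sub>0\<close>; the path leaves \<open>D\<close> during \<open>[0,T]\<close> iff \<open>\<sigma>\<close> is finite.
  Split according to the grid cell \<open>[t i, t (i+1))\<close> containing \<open>\<sigma>\<close>. If \<open>z (t i) \<notin> D\<close>, then \<open>\<sigma> = t i\<close>,
  which gives the events \<open>{\<tau>\<^sub>0 = t i, z (t i) \<notin> D}\<close>. If \<open>z (t i) \<in> D\<close>, then, as the path has not left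
  \<open>D\<close> before \<open>t i\<close>, the exit time restarted at \<open>t i\<close> is still \<open>\<sigma>\<close>, and the event is
  \<open>{\<tau>\<^sub>0 \<ge> t i, z (t i) \<in> D} \<inter> {\<tau>\<^bsub>t i\<^esub> < t (i+1)}\<close>. Its first factor is an event of the past
  and its second one an event of the future at time \<open>t i\<close>: since the paths are right-continuous and
  \<open>D\<close> is closed, both are determined by countably many (rational) times. The Markov property at
  \<open>t i\<close> therefore factors the conditional probability of the intersection given \<open>z (t i)\<close> into
  \<open>\<Psi> i \<cdot> q i\<close>, and integrating against the law of \<open>z (t i)\<close> gives the \<open>\<Phi>\<close>-term.\<close>

lemma subalgebra_vimage_algebra_borel:
  assumes "X \<in> borel_measurable M"
  shows "subalgebra M (vimage_algebra (space M) X borel)"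
  using assms unfolding subalgebra_def
  by (auto simp: space_vimage_algebra sets_vimage_algebra2 measurable_sets)

lemma (in prob_space) real_cond_exp_indicator_eq_cond_prob_fn:
  assumes X[measurable]: "X \<in> borel_measurable M" and A[measurable]: "A \<in> sets M"
    and g: "cond_prob_fn M X A g"
  shows "AE \<omega> in M. real_cond_exp M (vimage_algebra (space M) X borel) (indicator A) \<omega> = g (X \<omega>)"
proof -
  let ?N = "vimage_algebra (space M) X borel"
  interpret finite_measure_subalgebra M ?N
    by unfold_locales (rule subalgebra_vimage_algebra_borel[OF X])
  have [measurable]: "g \<in> borel_measurable borel" and g01: "\<And>x. 0 \<le> g x \<and> g x \<le> 1"
    and g_eq: "\<And>B. B \<in> sets borel \<Longrightarrow> measure M (A \<inter> X -` B \<inter> space M) = (LINT \<zeta>:B|distr M borel X. g \<zeta>)"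
    using g unfolding cond_prob_fn_def by auto
  show ?thesis
  proof (rule real_cond_exp_charact)
    fix C assume "C \<in> sets ?N"
    then obtain B where B[measurable]: "B \<in> sets borel" and C: "C = X -` B \<inter> space M"
      by (auto simp: sets_vimage_algebra2)
    have "(\<integral>\<omega>\<in>C. indicator A \<omega> \<partial>M) = measure M (A \<inter> X -` B \<inter> space M)"
      unfolding C set_lebesgue_integral_def
      by (simp add: indicator_inter_arith[symmetric] Int_commute Int_left_commute measure_def)
    also have "\<dots> = (LINT \<zeta>:B|distr M borel X. g \<zeta>)"
      by (rule g_eq[OF B])
    also have "\<dots> = (\<integral>\<omega>\<in>C. g (X \<omega>) \<partial>M)"
      unfolding C set_lebesgue_integral_def
      by (subst integral_distr) (auto intro!: Bochner_Integration.integral_cong simp: indicator_def)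
    finally show "(\<integral>\<omega>\<in>C. indicator A \<omega> \<partial>M) = (\<integral>\<omega>\<in>C. g (X \<omega>) \<partial>M)" .
  next
    show "integrable M (\<lambda>\<omega>. g (X \<omega>))"
      by (rule integrable_const_bound[where B=1]) (use g01 in auto)
    have "g \<circ> X \<in> borel_measurable ?N"
      by (rule measurable_comp[OF measurable_vimage_algebra1]) auto
    then show "(\<lambda>\<omega>. g (X \<omega>)) \<in> borel_measurable ?N"
      by (simp add: comp_def)
  qed (simp add: integrable_indicator_iff less_top[symmetric])
qed

lemma (in prob_space) measure_Int_eq_integral_cond_prob_fn:
  assumes X[measurable]: "X \<in> borel_measurable M"
    and A[measurable]: "A \<in> sets M" and B[measurable]: "B \<in> sets M"
    and g: "cond_prob_fn M X A g" and h: "cond_prob_fn M X B h"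
    and factor: "AE \<omega> in M. real_cond_exp M (vimage_algebra (space M) X borel) (indicator (A \<inter> B)) \<omega> =
          real_cond_exp M (vimage_algebra (space M) X borel) (indicator A) \<omega> *
          real_cond_exp M (vimage_algebra (space M) X borel) (indicator B) \<omega>"
  shows "measure M (A \<inter> B) = (\<integral>\<zeta>. h \<zeta> \<partial>density (distr M borel X) (\<lambda>\<zeta>. ennreal (g \<zeta>)))"
proof -
  let ?N = "vimage_algebra (space M) X borel"
  interpret finite_measure_subalgebra M ?N
    by unfold_locales (rule subalgebra_vimage_algebra_borel[OF X])
  have [measurable]: "g \<in> borel_measurable borel" "h \<in> borel_measurable borel" and g0: "\<And>x. 0 \<le> g x"
    using g h unfolding cond_prob_fn_def by auto
  have "measure M (A \<inter> B) = (\<integral>\<omega>. indicator (A \<inter> B) \<omega> \<partial>M)"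
    by simp
  also have "\<dots> = (\<integral>\<omega>. real_cond_exp M ?N (indicator (A \<inter> B)) \<omega> \<partial>M)"
    by (rule real_cond_exp_int(2)[symmetric]) (simp add: integrable_indicator_iff less_top[symmetric])
  also have "\<dots> = (\<integral>\<omega>. g (X \<omega>) * h (X \<omega>) \<partial>M)"
  proof (rule integral_cong_AE)
    show "AE \<omega> in M. real_cond_exp M ?N (indicator (A \<inter> B)) \<omega> = g (X \<omega>) * h (X \<omega>)"
      using factor real_cond_exp_indicator_eq_cond_prob_fn[OF X A g]
        real_cond_exp_indicator_eq_cond_prob_fn[OF X B h]
      by eventually_elim simp
  qed (use borel_measurable_cond_exp2 in auto)
  also have "\<dots> = (\<integral>\<zeta>. g \<zeta> * h \<zeta> \<partial>distr M borel X)"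
    by (subst integral_distr) auto
  also have "\<dots> = (\<integral>\<zeta>. h \<zeta> \<partial>density (distr M borel X) (\<lambda>\<zeta>. ennreal (g \<zeta>)))"
    by (subst integral_density) (auto simp: g0)
  finally show ?thesis .
qed

lemma (in finite_measure) measure_disjoint_UN_Un_UN:
  assumes "finite I" "finite J" "A ` I \<subseteq> sets M" "B ` J \<subseteq> sets M"
    and "disjoint_family_on A I" "disjoint_family_on B J"
    and "\<And>i j. i \<in> I \<Longrightarrow> j \<in> J \<Longrightarrow> A i \<inter> B j = {}"
  shows "measure M ((\<Union>i\<in>I. A i) \<union> (\<Union>j\<in>J. B j)) = (\<Sum>i\<in>I. measure M (A i)) + (\<Sum>j\<in>J. measure M (B j))"
proof -
  have "measure M ((\<Union>i\<in>I. A i) \<union> (\<Union>j\<in>J. B j)) = measure M (\<Union>i\<in>I. A i) + measure M (\<Union>j\<in>J. B j)"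
    using assms by (intro finite_measure_Union) blast+
  then show ?thesis
    using assms by (simp add: finite_measure_finite_Union)
qed

lemma exit_time_less_iff:
  assumes "b \<le> T"
  shows "exit_time z D T a \<omega> < ereal b \<longleftrightarrow> (\<exists>s\<in>{a..<b}. z s \<omega> \<notin> D)"
proof (cases "\<exists>s\<in>{a..T}. z s \<omega> \<notin> D")
  case True
  let ?S = "{s\<in>{a..T}. z s \<omega> \<notin> D}"
  have "?S \<noteq> {}" "bdd_below ?S"
    using True by (auto intro!: bdd_belowI[where m=a])
  then have "Inf ?S < b \<longleftrightarrow> (\<exists>s\<in>?S. s < b)"
    by (simp add: cInf_less_iff)
  then show ?thesis
    using True assms by (auto simp: exit_time_def)
qed (use assms in \<open>auto simp: exit_time_def\<close>)

lemma exit_time_ge_iff: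
  assumes "b \<le> T"
  shows "ereal b \<le> exit_time z D T a \<omega> \<longleftrightarrow> (\<forall>s\<in>{a..<b}. z s \<omega> \<in> D)"
  using exit_time_less_iff[OF assms, of z D a \<omega>] by (auto simp: not_less[symmetric])

lemma exit_time_le:
  assumes "a \<le> b" "b \<le> T" "z b \<omega> \<notin> D"
  shows "exit_time z D T a \<omega> \<le> ereal b"
proof -
  let ?S = "{s\<in>{a..T}. z s \<omega> \<notin> D}"
  have "b \<in> ?S"
    using assms by auto
  moreover have "bdd_below ?S"
    by (auto intro!: bdd_belowI[where m=a])
  ultimately show ?thesis
    by (auto simp: exit_time_def intro: cInf_lower)
qed

lemma exit_time_eq_iff_ge:
  assumes "a \<le> b" "b \<le> T" "z b \<omega> \<notin> D"
  shows "exit_time z D T a \<omega> = ereal b \<longleftrightarrow> ereal b \<le> exit_time z D T a \<omega>"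
  using exit_time_le[of a b T z \<omega> D] assms by auto

lemma exit_time_finite:
  assumes "\<exists>s\<in>{a..T}. z s \<omega> \<notin> D"
  obtains x where "exit_time z D T a \<omega> = ereal x" "a \<le> x" "x \<le> T"
proof -
  let ?S = "{s\<in>{a..T}. z s \<omega> \<notin> D}"
  have "?S \<noteq> {}" "bdd_below ?S"
    using assms by (auto intro!: bdd_belowI[where m=a])
  then have "a \<le> Inf ?S" "Inf ?S \<le> T"
    by (auto intro: cInf_greatest cInf_lower2)
  with assms that show ?thesis
    by (simp add: exit_time_def)
qed

lemma exit_time_restart:
  assumes "a \<le> b" "b \<le> T" "ereal b \<le> exit_time z D T a \<omega>"
  shows "exit_time z D T b \<omega> = exit_time z D T a \<omega>"
proof -
  have "{s\<in>{b..T}. z s \<omega> \<notin> D} = {s\<in>{a..T}. z s \<omega> \<notin> D}"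
    using assms exit_time_ge_iff[OF assms(2), of z D a \<omega>] by force
  then show ?thesis
    unfolding exit_time_def by (metis (no_types, lifting) mem_Collect_eq)
qed

lemma strict_mono_on_atMostI:
  fixes t :: "nat \<Rightarrow> 'a::order"
  assumes "\<forall>i<k. t i < t (Suc i)"
  shows "strict_mono_on {..k} t"
proof (rule strict_mono_onI)
  fix i j assume "i \<in> {..k}" "j \<in> {..k}" "i < j"
  then show "t i < t j"
  proof (induction j)
    case (Suc j)
    then show ?case
      using assms by (cases "i = j") (auto intro: order.strict_trans)
  qed simp
qed

lemma partition_bounds:
  fixes t :: "nat \<Rightarrow> 'a::order"
  assumes "t 0 = a" "t k = b" "\<forall>i<k. t i < t (Suc i)" "i \<le> k"
  shows "a \<le> t i" "t i \<le> b"
  using strict_mono_on_leD[OF strict_mono_on_atMostI[OF assms(3)], of 0 i]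
    strict_mono_on_leD[OF strict_mono_on_atMostI[OF assms(3)], of i k] assms by auto

lemma partition_cell_exists:
  fixes t :: "nat \<Rightarrow> 'a::linorder"
  assumes "t 0 \<le> x" "x < t k"
  shows "\<exists>i<k. t i \<le> x \<and> x < t (Suc i)"
  using assms
proof (induction k)
  case (Suc k)
  then show ?case
    by (cases "x < t k") (auto simp: not_less intro: less_SucI)
qed simp

lemma partition_cell_unique:
  fixes t :: "nat \<Rightarrow> 'a::linorder"
  assumes "\<forall>i<k. t i < t (Suc i)" "i < k" "j < k"
    and "t i \<le> x" "x < t (Suc i)" "t j \<le> x" "x < t (Suc j)"
  shows "i = j"
proof -
  have "\<not> m < n" if "m < k" "n < k" "x < t (Suc m)" "t n \<le> x" for m n
    using strict_mono_on_leD[OF strict_mono_on_atMostI[OF assms(1)], of "Suc m" n] that by auto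
  then show ?thesis
    using assms(2-) by (meson linorder_neqE_nat)
qed

lemma partition_node_in_cell:
  fixes t :: "nat \<Rightarrow> 'a::linorder"
  assumes "\<forall>i<k. t i < t (Suc i)" "i < k" "j \<le> k" "t i \<le> t j" "t j < t (Suc i)"
  shows "j = i"
proof -
  note mono = strict_mono_on_atMostI[OF assms(1)]
  have "i \<le> j"
    using strict_mono_on_less_eq[OF mono, of i j] assms(2-4) by simp
  moreover have "j < Suc i"
    using strict_mono_on_less[OF mono, of j "Suc i"] assms(2,3,5) by simp
  ultimately show ?thesis
    by simp
qed

lemma exit_time_cell_iff:
  assumes "c \<le> a" "a \<le> T"
  shows "ereal a \<le> exit_time z D T c \<omega> \<and> exit_time z D T a \<omega> < ereal b \<longleftrightarrow>
         ereal a \<le> exit_time z D T c \<omega> \<and> exit_time z D T c \<omega> < ereal b"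
  using exit_time_restart[OF assms, of z D \<omega>] by auto

text \<open>A grid point outside \<open>D\<close> is itself an exit point, so a first exit in a cell whose left end lies
  outside \<open>D\<close> happens at that left end; \<open>T\<close> can only be reached in this way.\<close>

lemma exit_time_in_partition:
  fixes t :: "nat \<Rightarrow> real"
  assumes t: "t 0 = 0" "t k = T" "\<forall>i<k. t i < t (Suc i)" and exits: "\<exists>s\<in>{0..T}. z s \<omega> \<notin> D"
  shows "(\<exists>i<k. ereal (t i) \<le> exit_time z D T 0 \<omega> \<and> exit_time z D T 0 \<omega> < ereal (t (Suc i)) \<and> z (t i) \<omega> \<in> D)
       \<or> (\<exists>i\<le>k. exit_time z D T 0 \<omega> = ereal (t i) \<and> z (t i) \<omega> \<notin> D)"
proof -
  obtain x where x: "exit_time z D T 0 \<omega> = ereal x" "0 \<le> x" "x \<le> T"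
    using exit_time_finite[where z=z and \<omega>=\<omega>, OF exits] .
  show ?thesis
  proof (cases "x < T")
    case True
    then obtain i where i: "i < k" "t i \<le> x" "x < t (Suc i)"
      using partition_cell_exists[of t x k] t x by auto
    show ?thesis
    proof (cases "z (t i) \<omega> \<in> D")
      case False
      then have "exit_time z D T 0 \<omega> \<le> ereal (t i)"
        using exit_time_le[where z=z and D=D and a=0 and b="t i" and \<omega>=\<omega>] partition_bounds[OF t, of i] i
        by auto
      then show ?thesis
        using False i x by auto
    qed (use i x in auto)
  next
    case False
    then have "x = T"
      using x by simp
    then have "\<forall>s\<in>{0..<T}. z s \<omega> \<in> D"
      using exit_time_ge_iff[where z=z and D=D and a=0 and b=T and T=T and \<omega>=\<omega>] x by simp
    then have "z T \<omega> \<notin> D"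
      using exits by (metis atLeastAtMost_iff atLeastLessThan_iff order_less_le)
    then show ?thesis
      using x \<open>x = T\<close> t(2) by auto
  qed
qed

lemma exit_event_partition:
  fixes t :: "nat \<Rightarrow> real" and z :: "real \<Rightarrow> 'w \<Rightarrow> 'a" and D :: "'a set" and \<Omega> :: "'w set"
  assumes t: "t 0 = 0" "t k = T" "\<forall>i<k. t i < t (Suc i)"
  defines "A \<equiv> \<lambda>i. {\<omega>\<in>\<Omega>. ereal (t i) \<le> exit_time z D T 0 \<omega> \<and> z (t i) \<omega> \<in> D}"
    and "B \<equiv> \<lambda>i. {\<omega>\<in>\<Omega>. exit_time z D T (t i) \<omega> < ereal (t (Suc i))}"
    and "C \<equiv> \<lambda>i. {\<omega>\<in>\<Omega>. exit_time z D T 0 \<omega> = ereal (t i) \<and> z (t i) \<omega> \<notin> D}"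
  shows "{\<omega>\<in>\<Omega>. \<exists>s\<in>{0..T}. z s \<omega> \<notin> D} = (\<Union>i<k. A i \<inter> B i) \<union> (\<Union>i\<le>k. C i)"
    and "disjoint_family_on (\<lambda>i. A i \<inter> B i) {..<k}"
    and "disjoint_family_on C {..k}"
    and "\<And>i j. i < k \<Longrightarrow> j \<le> k \<Longrightarrow> A i \<inter> B i \<inter> C j = {}"
proof -
  let ?\<sigma> = "\<lambda>\<omega>. exit_time z D T 0 \<omega>"
  note t_range = partition_bounds[OF t]
  have ereal_t: "\<forall>i<k. ereal (t i) < ereal (t (Suc i))"
    using t(3) by simp
  have AB: "A i \<inter> B i = {\<omega>\<in>\<Omega>. ereal (t i) \<le> ?\<sigma> \<omega> \<and> ?\<sigma> \<omega> < ereal (t (Suc i)) \<and> z (t i) \<omega> \<in> D}"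
    if "i < k" for i
    using exit_time_cell_iff[OF t_range(1,2), of i z D] that unfolding A_def B_def by auto
  show "{\<omega>\<in>\<Omega>. \<exists>s\<in>{0..T}. z s \<omega> \<notin> D} = (\<Union>i<k. A i \<inter> B i) \<union> (\<Union>i\<le>k. C i)"
  proof (intro equalityI subsetI)
    fix \<omega> assume "\<omega> \<in> {\<omega>\<in>\<Omega>. \<exists>s\<in>{0..T}. z s \<omega> \<notin> D}"
    then show "\<omega> \<in> (\<Union>i<k. A i \<inter> B i) \<union> (\<Union>i\<le>k. C i)"
      using exit_time_in_partition[OF t, of z \<omega> D] AB unfolding C_def by auto
  next
    fix \<omega> assume "\<omega> \<in> (\<Union>i<k. A i \<inter> B i) \<union> (\<Union>i\<le>k. C i)"
    then consider i where "i < k" "\<omega> \<in> \<Omega>" "exit_time z D T (t i) \<omega> < ereal (t (Suc i))"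
      | i where "i \<le> k" "\<omega> \<in> \<Omega>" "z (t i) \<omega> \<notin> D"
      unfolding A_def B_def C_def by auto
    then show "\<omega> \<in> {\<omega>\<in>\<Omega>. \<exists>s\<in>{0..T}. z s \<omega> \<notin> D}"
    proof cases
      case (1 i)
      then show ?thesis
        using exit_time_less_iff[where z=z and D=D and a="t i" and b="t (Suc i)" and \<omega>=\<omega>]
          t_range[of i] t_range[of "Suc i"] by fastforce
    qed (use t_range in auto)
  qed
  show "disjoint_family_on (\<lambda>i. A i \<inter> B i) {..<k}"
    using partition_cell_unique[OF ereal_t] unfolding disjoint_family_on_def by (auto simp: AB)
  show "disjoint_family_on C {..k}"
    unfolding disjoint_family_on_def
  proof (intro ballI impI)
    fix i j assume "i \<in> {..k}" "j \<in> {..k}" "i \<noteq> j"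
    then have "t i \<noteq> t j"
      using strict_mono_on_eqD[OF strict_mono_on_atMostI[OF t(3)]] by metis
    then show "C i \<inter> C j = {}"
      unfolding C_def by auto
  qed
  show "A i \<inter> B i \<inter> C j = {}" if "i < k" "j \<le> k" for i j
    using partition_node_in_cell[OF t(3) that] AB[OF that(1)] unfolding C_def by auto
qed

lemma right_continuous_in_closed_iff_rat:
  fixes f :: "real \<Rightarrow> 'a::topological_space"
  assumes cont: "\<forall>u\<in>{a..<b}. continuous (at_right u) f" and "closed D"
  shows "(\<forall>s\<in>{a..<b}. f s \<in> D) \<longleftrightarrow> (\<forall>q::rat. a \<le> of_rat q \<and> of_rat q < b \<longrightarrow> f (of_rat q) \<in> D)"
proof (intro iffI allI impI ballI; (elim conjE)?)
  fix s assume rat: "\<forall>q::rat. a \<le> of_rat q \<and> of_rat q < b \<longrightarrow> f (of_rat q) \<in> D"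
    and s: "s \<in> {a..<b}"
  show "f s \<in> D"
  proof (rule ccontr)
    assume "f s \<notin> D"
    have "(f \<longlongrightarrow> f s) (at_right s)"
      using cont s by (simp add: continuous_within)
    then have "eventually (\<lambda>x. f x \<in> - D) (at_right s)"
      using \<open>f s \<notin> D\<close> \<open>closed D\<close> by (intro topological_tendstoD) auto
    then obtain c where "c > s" and c: "\<And>y. s < y \<Longrightarrow> y < c \<Longrightarrow> f y \<notin> D"
      by (auto simp: eventually_at_right_field)
    obtain q :: rat where q: "s < of_rat q" "of_rat q < min b c"
      using of_rat_dense[of s "min b c"] \<open>c > s\<close> s by auto
    then show False
      using rat[rule_format, of q] c[of "of_rat q"] s by auto
  qed
qed auto

lemma pred_in_closed_on_interval:
  fixes z :: "real \<Rightarrow> 'w \<Rightarrow> 'a::topological_space"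
  assumes cont: "\<forall>\<omega>\<in>space N. \<forall>u\<in>{a..<b}. continuous (at_right u) (\<lambda>s. z s \<omega>)" and "closed D"
    and pred_z: "\<And>r. a \<le> r \<Longrightarrow> r < b \<Longrightarrow> Measurable.pred N (\<lambda>\<omega>. z r \<omega> \<in> D)"
  shows "Measurable.pred N (\<lambda>\<omega>. \<forall>s\<in>{a..<b}. z s \<omega> \<in> D)"
proof -
  let ?rat = "\<lambda>\<omega>. \<forall>q::rat. a \<le> of_rat q \<and> of_rat q < b \<longrightarrow> z (of_rat q) \<omega> \<in> D"
  have rat: "Measurable.pred N ?rat"
    by (rule pred_intros_countable, rule pred_intros_imp') (use pred_z in auto)
  have eq: "(\<forall>s\<in>{a..<b}. z s \<omega> \<in> D) = ?rat \<omega>" if "\<omega> \<in> space N" for \<omega>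
    by (rule right_continuous_in_closed_iff_rat) (use cont that \<open>closed D\<close> in auto)
  have "{\<omega>\<in>space N. \<forall>s\<in>{a..<b}. z s \<omega> \<in> D} = {\<omega>\<in>space N. ?rat \<omega>}"
    using eq by blast
  with rat show ?thesis
    unfolding pred_def by (simp only:)
qed

lemma space_past_alg [simp]: "space (past_alg M z t) = space M"
  by (simp add: past_alg_def space_measure_of_conv)

lemma space_future_alg [simp]: "space (future_alg M z t T) = space M"
  by (simp add: future_alg_def space_measure_of_conv)

lemma sets_past_alg_subset:
  assumes "\<forall>s\<in>{0..t}. z s \<in> borel_measurable M"
  shows "sets (past_alg M z t) \<subseteq> sets M"
  unfolding past_alg_def using assms by (subst sigma_le_sets) (auto intro: measurable_sets)

lemma sets_future_alg_subset:
  assumes "\<forall>s\<in>{t..T}. z s \<in> borel_measurable M"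
  shows "sets (future_alg M z t T) \<subseteq> sets M"
  unfolding future_alg_def using assms by (subst sigma_le_sets) (auto intro: measurable_sets)

lemma pred_sigma_vimage:
  assumes "G \<subseteq> Pow \<Omega>" "X -` B \<inter> \<Omega> \<in> G"
  shows "Measurable.pred (sigma \<Omega> G) (\<lambda>\<omega>. X \<omega> \<in> B)"
proof -
  have "{\<omega> \<in> \<Omega>. X \<omega> \<in> B} \<in> sets (sigma \<Omega> G)"
    using assms by (auto simp: Int_commute vimage_def Collect_conj_eq)
  then show ?thesis
    using assms(1) by (simp add: pred_def space_measure_of_conv)
qed

lemma pred_past_alg:
  assumes "0 \<le> r" "r \<le> t" "B \<in> sets borel"
  shows "Measurable.pred (past_alg M z t) (\<lambda>\<omega>. z r \<omega> \<in> B)"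
  unfolding past_alg_def using assms by (intro pred_sigma_vimage) auto

lemma pred_future_alg:
  assumes "t \<le> r" "r \<le> T" "B \<in> sets borel"
  shows "Measurable.pred (future_alg M z t T) (\<lambda>\<omega>. z r \<omega> \<in> B)"
  unfolding future_alg_def using assms by (intro pred_sigma_vimage) auto

lemma exit_time_ge_in_past_alg:
  assumes cont: "\<forall>\<omega>\<in>space M. \<forall>u\<in>{0..<T}. continuous (at_right u) (\<lambda>s. z s \<omega>)"
    and "closed D" "0 \<le> a" "a \<le> T" "B \<in> sets borel"
  shows "{\<omega>\<in>space M. ereal a \<le> exit_time z D T 0 \<omega> \<and> z a \<omega> \<in> B} \<in> sets (past_alg M z a)"
proof -
  have "Measurable.pred (past_alg M z a) (\<lambda>\<omega>. (\<forall>s\<in>{0..<a}. z s \<omega> \<in> D) \<and> z a \<omega> \<in> B)"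
  proof (rule pred_intros_logic(3))
    show "Measurable.pred (past_alg M z a) (\<lambda>\<omega>. \<forall>s\<in>{0..<a}. z s \<omega> \<in> D)"
    proof (rule pred_in_closed_on_interval)
      show "\<forall>\<omega>\<in>space (past_alg M z a). \<forall>u\<in>{0..<a}. continuous (at_right u) (\<lambda>s. z s \<omega>)"
        using cont \<open>a \<le> T\<close> by auto
      show "Measurable.pred (past_alg M z a) (\<lambda>\<omega>. z r \<omega> \<in> D)" if "0 \<le> r" "r < a" for r
        using that borel_closed[OF \<open>closed D\<close>] by (intro pred_past_alg) auto
    qed fact
    show "Measurable.pred (past_alg M z a) (\<lambda>\<omega>. z a \<omega> \<in> B)"
      by (rule pred_past_alg) (use assms in auto)
  qed
  from predE[OF this] have "{\<omega>\<in>space M. (\<forall>s\<in>{0..<a}. z s \<omega> \<in> D) \<and> z a \<omega> \<in> B} \<in> sets (past_alg M z a)"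
    by (simp only: space_past_alg)
  then show ?thesis
    by (simp only: exit_time_ge_iff[OF \<open>a \<le> T\<close>])
qed

lemma exit_time_less_in_future_alg:
  assumes cont: "\<forall>\<omega>\<in>space M. \<forall>u\<in>{0..<T}. continuous (at_right u) (\<lambda>s. z s \<omega>)"
    and "closed D" "0 \<le> a" "b \<le> T"
  shows "{\<omega>\<in>space M. exit_time z D T a \<omega> < ereal b} \<in> sets (future_alg M z a T)"
proof -
  have "Measurable.pred (future_alg M z a T) (\<lambda>\<omega>. \<not> (\<forall>s\<in>{a..<b}. z s \<omega> \<in> D))"
  proof (rule pred_intros_logic(2), rule pred_in_closed_on_interval)
    show "\<forall>\<omega>\<in>space (future_alg M z a T). \<forall>u\<in>{a..<b}. continuous (at_right u) (\<lambda>s. z s \<omega>)"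
      using cont assms by auto
    show "Measurable.pred (future_alg M z a T) (\<lambda>\<omega>. z r \<omega> \<in> D)" if "a \<le> r" "r < b" for r
      using that assms borel_closed[OF \<open>closed D\<close>] by (intro pred_future_alg) auto
  qed fact
  from predE[OF this] have "{\<omega>\<in>space M. \<not> (\<forall>s\<in>{a..<b}. z s \<omega> \<in> D)} \<in> sets (future_alg M z a T)"
    by (simp only: space_future_alg)
  then show ?thesis
    by (simp add: exit_time_less_iff[OF \<open>b \<le> T\<close>])
qed

lemma exit_time_eq_notin_in_past_alg:
  assumes "\<forall>\<omega>\<in>space M. \<forall>u\<in>{0..<T}. continuous (at_right u) (\<lambda>s. z s \<omega>)"
    and "closed D" "0 \<le> a" "a \<le> T"
  shows "{\<omega>\<in>space M. exit_time z D T 0 \<omega> = ereal a \<and> z a \<omega> \<notin> D} \<in> sets (past_alg M z a)"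
proof -
  have "{\<omega>\<in>space M. exit_time z D T 0 \<omega> = ereal a \<and> z a \<omega> \<notin> D} =
        {\<omega>\<in>space M. ereal a \<le> exit_time z D T 0 \<omega> \<and> z a \<omega> \<in> - D}"
    using exit_time_eq_iff_ge[of 0 a T z \<omega> D for \<omega>] assms(3,4) by auto
  also have "\<dots> \<in> sets (past_alg M z a)"
    using assms by (intro exit_time_ge_in_past_alg) (auto intro: borel_open)
  finally show ?thesis .
qed

lemma (in prob_space) markov_on_measure_Int:
  assumes "markov_on M T z" "\<forall>s\<in>{0..T}. z s \<in> borel_measurable M" "0 \<le> r" "r \<le> T"
    and A: "A \<in> sets (past_alg M z r)" and B: "B \<in> sets (future_alg M z r T)"
    and "cond_prob_fn M (z r) A g" "cond_prob_fn M (z r) B h"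
  shows "measure M (A \<inter> B) = (\<integral>\<zeta>. h \<zeta> \<partial>density (distr M borel (z r)) (\<lambda>\<zeta>. ennreal (g \<zeta>)))"
proof (rule measure_Int_eq_integral_cond_prob_fn)
  show "A \<in> events" "B \<in> events"
    using A B sets_past_alg_subset[of r z M] sets_future_alg_subset[of r T z M] assms(2-4) by auto
qed (use assms in \<open>auto simp: markov_on_def\<close>)

theorem mainTheorem2:
  fixes M :: "'w measure" and z :: "real \<Rightarrow> 'w \<Rightarrow> real ^ 'm" and D :: "(real ^ 'm) set"
    and T :: real and k :: nat and t :: "nat \<Rightarrow> real"
    and \<Psi> q :: "nat \<Rightarrow> real ^ 'm \<Rightarrow> real"
  assumes "prob_space M"
    and "\<forall>s\<in>{0..T}. z s \<in> borel_measurable M"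
    and "\<forall>\<omega>\<in>space M. cadlag_on T (\<lambda>s. z s \<omega>)"
    and "markov_on M T z"
    and "closed D"
    and "t 0 = 0" and "t k = T" and "\<forall>i<k. t i < t (Suc i)"
    and "\<forall>i<k. cond_prob_fn M (z (t i))
            {\<omega>\<in>space M. exit_time z D T 0 \<omega> \<ge> ereal (t i) \<and> z (t i) \<omega> \<in> D} (\<Psi> i)"
    and "\<forall>i<k. cond_prob_fn M (z (t i))
            {\<omega>\<in>space M. exit_time z D T (t i) \<omega> < ereal (t (Suc i))} (q i)"
  shows "measure M {\<omega>\<in>space M. \<exists>s\<in>{0..T}. z s \<omega> \<notin> D} =
           (\<Sum>i<k. \<integral>\<zeta>. q i \<zeta> \<partial>(density (distr M borel (z (t i))) (\<lambda>\<zeta>. ennreal (\<Psi> i \<zeta>))))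
         + (\<Sum>i\<le>k. measure M {\<omega>\<in>space M. exit_time z D T 0 \<omega> = ereal (t i) \<and> z (t i) \<omega> \<notin> D})"
proof -
  interpret prob_space M by fact
  have cont: "\<forall>\<omega>\<in>space M. \<forall>u\<in>{0..<T}. continuous (at_right u) (\<lambda>s. z s \<omega>)"
    using assms(3) by (simp add: cadlag_on_def)
  note t_range = partition_bounds[OF assms(6-8)]
  define A where "A i = {\<omega>\<in>space M. ereal (t i) \<le> exit_time z D T 0 \<omega> \<and> z (t i) \<omega> \<in> D}" for i
  define B where "B i = {\<omega>\<in>space M. exit_time z D T (t i) \<omega> < ereal (t (Suc i))}" for i
  define C where "C i = {\<omega>\<in>space M. exit_time z D T 0 \<omega> = ereal (t i) \<and> z (t i) \<omega> \<notin> D}" for i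
  note partition = exit_event_partition[OF assms(6-8), where \<Omega>="space M" and z=z and D=D,
      folded A_def B_def C_def]
  have A_past: "A i \<in> sets (past_alg M z (t i))" if "i \<le> k" for i
    unfolding A_def using t_range[OF that] assms(5)
    by (intro exit_time_ge_in_past_alg[OF cont]) (auto intro: borel_closed)
  have B_future: "B i \<in> sets (future_alg M z (t i) T)" if "i < k" for i
    unfolding B_def using t_range[of i] t_range[of "Suc i"] that
    by (intro exit_time_less_in_future_alg[OF cont assms(5)]) auto
  have AB_events: "A i \<inter> B i \<in> events" if "i < k" for i
    using A_past[of i] B_future[OF that] sets_past_alg_subset[of "t i" z M]
      sets_future_alg_subset[of "t i" T z M] t_range[of i] that assms(2) by auto
  have C_events: "C i \<in> events" if "i \<le> k" for i
    using exit_time_eq_notin_in_past_alg[OF cont assms(5) t_range[OF that]]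
      sets_past_alg_subset[of "t i" z M] t_range[OF that] assms(2) unfolding C_def by auto
  have cell: "measure M (A i \<inter> B i) = (\<integral>\<zeta>. q i \<zeta> \<partial>density (distr M borel (z (t i))) (\<lambda>\<zeta>. ennreal (\<Psi> i \<zeta>)))"
    if "i < k" for i
    using markov_on_measure_Int[OF assms(4,2) t_range[of i] A_past[of i] B_future[OF that]] assms(9,10) that
    unfolding A_def B_def by auto
  show ?thesis
    unfolding partition(1) C_def[symmetric]
    by (subst measure_disjoint_UN_Un_UN) (use partition(2-4) AB_events C_events cell in \<open>auto intro!: sum.cong\<close>)
qed

end
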